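(* Let $\sigma$ be a permutation of length $m$ with exactly one descent and exactly $i$ adjacency pairs. Then the letter $m$ lies on the same side of the descent as the letter $1$ in $\sigma$ if and only if $m-i$ is odd.
   Context: A permutation of length $m$ is an arrangement $\sigma_1\cdots\sigma_m$ of $1,\dots,m$. A descent is an index $d$ with $\sigma_d>\sigma_{d+1}$; if $\sigma$ has exactly one descent at $d$, the positions $1,\dots,d$ are before the descent and $d+1,\dots,m$ after it, and two letters are on the same side of the descent if their positions are both $\le d$ or both $>d$. An adjacency pair is an index $j$ with $\sigma_{j+1}=\sigma_j+1$; the number of adjacency pairs is the number of such indices (so a run of $k$ consecutive increasing values in consecutive positions contributes $k-1$). *)

theory Defs
  imports Main
begin

(* A permutation of length m is a list sigma_1 ... sigma_m (stored 0-based: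
   sigma_k = s ! (k-1)) that is an arrangement of 1..m. *)
definition is_perm :: "nat \<Rightarrow> nat list \<Rightarrow> bool" where
  "is_perm m s \<longleftrightarrow> length s = m \<and> distinct s \<and> set s = {1..m}"

definition descents :: "nat list \<Rightarrow> nat set" where
  "descents s = {d. 1 \<le> d \<and> d < length s \<and> s ! (d - 1) > s ! d}"

definition adjacency_pairs :: "nat list \<Rightarrow> nat" where
  "adjacency_pairs s = card {j. 1 \<le> j \<and> j < length s \<and> s ! j = s ! (j - 1) + 1}"

definition pos :: "nat list \<Rightarrow> nat \<Rightarrow> nat" where
  "pos s a = (THE k. 1 \<le> k \<and> k \<le> length s \<and> s ! (k - 1) = a)"

definition same_side :: "nat list \<Rightarrow> nat \<Rightarrow> nat \<Rightarrow> nat \<Rightarrow> bool" where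
  "same_side s d a b \<longleftrightarrow> (pos s a \<le> d \<longleftrightarrow> pos s b \<le> d)"

end

theory Submission
  imports Defs
begin

text \<open>Colour each letter k by the side of the descent on which it lies. Within one side the
  letters increase, so k and k+1 lie on the same side exactly when k+1 directly follows k,
  i.e. when they form an adjacency pair. Hence the i adjacency pairs are the agreements between
  consecutive colours among the m-1 pairs (k, k+1), and the colours of 1 and m agree iff the number
  m-1-i of colour changes is even.\<close>

lemma ends_eq_iff_odd_count_agreements:
  fixes S :: "nat \<Rightarrow> bool"
  shows "S 1 = S (Suc n) \<longleftrightarrow> odd (Suc n - card {k\<in>{1..n}. S k = S (Suc k)})"
proof (induction n)
  case 0
  then show ?case by simp
next
  case (Suc n)
  let ?A = "\<lambda>n. {k\<in>{1..n}. S k = S (Suc k)}"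
  have A_Suc: "?A (Suc n) = ?A n \<union> (if S (Suc n) = S (Suc (Suc n)) then {Suc n} else {})"
    by (auto simp: le_Suc_eq)
  have "card (?A n) \<le> card {1..n}"
    by (intro card_mono) auto
  then have "card (?A n) \<le> n" by simp
  with Suc A_Suc show ?case
    by (cases "S (Suc n) = S (Suc (Suc n))") (auto simp: Suc_diff_le)
qed

lemma nth_less_nth_of_ascents:
  fixes s :: "nat list"
  assumes "\<And>t. lo \<le> t \<Longrightarrow> Suc t < hi \<Longrightarrow> s ! t < s ! Suc t"
  shows "lo \<le> a \<Longrightarrow> a < b \<Longrightarrow> b < hi \<Longrightarrow> s ! a < s ! b"
proof (induction b)
  case 0
  then show ?case by simp
next
  case (Suc b)
  show ?case
  proof (cases "a = b")
    case True
    then show ?thesis using assms Suc.prems by auto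
  next
    case False
    then have "s ! a < s ! b" using Suc by auto
    also have "s ! b < s ! Suc b" using assms Suc.prems False by auto
    finally show ?thesis .
  qed
qed

lemma pos_nth:
  assumes "distinct s" and "p < length s"
  shows "pos s (s ! p) = Suc p"
  unfolding pos_def
proof (rule the_equality)
  fix k assume k: "1 \<le> k \<and> k \<le> length s \<and> s ! (k - 1) = s ! p"
  then have "k - 1 = p" using assms nth_eq_iff_index_eq[of s "k - 1" p] by auto
  with k show "k = Suc p" by auto
qed (use assms in auto)

lemma is_perm_obtain_index:
  assumes "is_perm m s" and "v \<in> {1..m}"
  obtains p where "p < m" and "s ! p = v"
  using assms by (metis in_set_conv_nth is_perm_def)

lemma adjacency_pairs_eq_card_consecutive_pos:
  assumes perm: "is_perm m s"
  shows "adjacency_pairs s = card {k\<in>{1..m-1}. pos s (Suc k) = Suc (pos s k)}"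
proof -
  have len: "length s = m" and dist: "distinct s" and letters: "set s = {1..m}"
    using perm by (auto simp: is_perm_def)
  define P where "P = {p. Suc p < m \<and> s ! Suc p = Suc (s ! p)}"
  have "{j. 1 \<le> j \<and> j < length s \<and> s ! j = s ! (j - 1) + 1} = Suc ` P"
    by (auto simp: P_def len image_iff gr0_conv_Suc Suc_le_eq)
  then have "adjacency_pairs s = card P"
    by (simp add: adjacency_pairs_def card_image)
  also have "\<dots> = card (nth s ` P)"
    by (rule card_image[symmetric], rule inj_on_nth) (auto simp: dist len P_def)
  also have "nth s ` P = {k\<in>{1..m-1}. pos s (Suc k) = Suc (pos s k)}"
  proof (intro equalityI subsetI)
    fix k assume "k \<in> nth s ` P"
    then obtain p where p: "Suc p < m" "s ! Suc p = Suc (s ! p)" and k: "k = s ! p"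
      by (auto simp: P_def)
    have "s ! p \<in> {1..m}" "s ! Suc p \<in> {1..m}"
      using p(1) len letters nth_mem[of p s] nth_mem[of "Suc p" s] by auto
    then show "k \<in> {k\<in>{1..m-1}. pos s (Suc k) = Suc (pos s k)}"
      using p k pos_nth[OF dist, of p] pos_nth[OF dist, of "Suc p"] len by auto
  next
    fix k assume "k \<in> {k\<in>{1..m-1}. pos s (Suc k) = Suc (pos s k)}"
    then have k: "k \<in> {1..m}" "Suc k \<in> {1..m}" and adj: "pos s (Suc k) = Suc (pos s k)"
      by auto
    obtain p where p: "p < m" "s ! p = k" using is_perm_obtain_index[OF perm k(1)] .
    obtain q where q: "q < m" "s ! q = Suc k" using is_perm_obtain_index[OF perm k(2)] .
    have "q = Suc p" using adj p q pos_nth[OF dist] len by force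
    with p q show "k \<in> nth s ` P" by (auto simp: P_def)
  qed
  finally show ?thesis .
qed

locale one_descent_perm =
  fixes m d :: nat and \<sigma> :: "nat list"
  assumes perm: "is_perm m \<sigma>"
    and single_descent: "descents \<sigma> = {d}"
begin

lemma length_eq: "length \<sigma> = m"
  and distinct: "distinct \<sigma>"
  using perm by (auto simp: is_perm_def)

lemma descent_bounds: "1 \<le> d" "d < m"
  and descent: "\<sigma> ! d < \<sigma> ! (d - 1)"
proof -
  have "d \<in> descents \<sigma>" using single_descent by simp
  then show "1 \<le> d" "d < m" "\<sigma> ! d < \<sigma> ! (d - 1)"
    using length_eq by (auto simp: descents_def)
qed

lemma ascent:
  assumes "Suc t < m" "Suc t \<noteq> d"
  shows "\<sigma> ! t < \<sigma> ! Suc t"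
proof -
  have "Suc t \<notin> descents \<sigma>" using single_descent assms by simp
  then have "\<sigma> ! t \<le> \<sigma> ! Suc t" using assms length_eq by (auto simp: descents_def)
  moreover have "\<sigma> ! t \<noteq> \<sigma> ! Suc t"
    using distinct assms length_eq nth_eq_iff_index_eq[of \<sigma> t "Suc t"] by simp
  ultimately show ?thesis by simp
qed

lemma nth_less_nth_same_side:
  assumes "a < b" "b < m" "a < d \<longleftrightarrow> b < d"
  shows "\<sigma> ! a < \<sigma> ! b"
proof (cases "b < d")
  case True
  then show ?thesis
    using nth_less_nth_of_ascents[of 0 d \<sigma> a b] ascent descent_bounds assms by auto
next
  case False
  then show ?thesis
    using nth_less_nth_of_ascents[of d m \<sigma> a b] ascent assms by auto
qed

text \<open>A letter strictly between positions p and q on the same side would have a value strictly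
  between \<open>\<sigma> ! p\<close> and \<open>\<sigma> ! q = \<sigma> ! p + 1\<close>.\<close>
lemma successor_follows_iff_same_side:
  assumes p: "p < m" and q: "q < m" and succ: "\<sigma> ! q = Suc (\<sigma> ! p)"
  shows "q = Suc p \<longleftrightarrow> (p < d \<longleftrightarrow> q < d)"
proof
  assume "q = Suc p"
  with succ descent show "p < d \<longleftrightarrow> q < d"
    using descent_bounds by (cases "q = d") auto
next
  assume side: "p < d \<longleftrightarrow> q < d"
  have "\<not> q < p"
    using nth_less_nth_same_side[of q p] p side succ by auto
  moreover have "q \<noteq> p" using succ by auto
  ultimately have "p < q" by simp
  moreover have "\<not> Suc p < q"
  proof
    assume "Suc p < q"
    then have "\<sigma> ! p < \<sigma> ! Suc p" "\<sigma> ! Suc p < \<sigma> ! q"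
      using nth_less_nth_same_side[of p "Suc p"] nth_less_nth_same_side[of "Suc p" q] side q
      by auto
    with succ show False by simp
  qed
  ultimately show "q = Suc p" by simp
qed

lemma consecutive_pos_iff_same_side:
  assumes "k \<in> {1..m-1}"
  shows "pos \<sigma> (Suc k) = Suc (pos \<sigma> k) \<longleftrightarrow> same_side \<sigma> d k (Suc k)"
proof -
  have letters: "k \<in> {1..m}" "Suc k \<in> {1..m}"
    using assms by auto
  obtain p where p: "p < m" "\<sigma> ! p = k"
    using is_perm_obtain_index[OF perm letters(1)] .
  obtain q where q: "q < m" "\<sigma> ! q = Suc k"
    using is_perm_obtain_index[OF perm letters(2)] .
  have "pos \<sigma> k = Suc p" "pos \<sigma> (Suc k) = Suc q"
    using pos_nth[OF distinct, of p] pos_nth[OF distinct, of q] p q length_eq by simp_all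
  then show ?thesis
    using successor_follows_iff_same_side[OF p(1) q(1)] p q by (simp add: same_side_def Suc_le_eq)
qed

lemma adjacency_pairs_eq_card_same_side:
  "adjacency_pairs \<sigma> = card {k\<in>{1..m-1}. same_side \<sigma> d k (Suc k)}"
  unfolding adjacency_pairs_eq_card_consecutive_pos[OF perm]
  using consecutive_pos_iff_same_side by (intro arg_cong[where f = card] Collect_cong) auto

end

theorem mainTheorem11:
  fixes m i d :: nat and \<sigma> :: "nat list"
  assumes "is_perm m \<sigma>"
    and "descents \<sigma> = {d}"
    and "adjacency_pairs \<sigma> = i"
  shows "same_side \<sigma> d m 1 \<longleftrightarrow> odd (m - i)"
proof -
  interpret one_descent_perm m d \<sigma>
    using assms(1,2) by unfold_locales
  define S where "S k \<longleftrightarrow> pos \<sigma> k \<le> d" for k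
  have "m = Suc (m - 1)" using descent_bounds by simp
  then have "S 1 = S m \<longleftrightarrow> odd (m - card {k\<in>{1..m-1}. S k = S (Suc k)})"
    using ends_eq_iff_odd_count_agreements[of S "m - 1"] by simp
  moreover have "card {k\<in>{1..m-1}. S k = S (Suc k)} = i"
    using assms(3) adjacency_pairs_eq_card_same_side by (simp add: S_def same_side_def)
  ultimately show ?thesis
    by (auto simp: same_side_def S_def)
qed

end
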